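(* Let $n\ge3$, $1<k<n/2$, $p>\frac{nk}{n-2k}$, and let $u$ be a regular solution of (1.6). If $u(r)=O(r^{-\frac{2k}{p-k}-\varepsilon})$ as $r\to\infty$ for some $\varepsilon\in\big(0,\frac{n-2k}{k}-\frac{2k}{p-k}\big)$, then $u(r)=O(r^{\frac{2k-n}{k}})$ as $r\to\infty$.
   Context: Problem (1.6) is: given $\rho>0$, find $u$ with $-\tfrac{1}{k}C_{n-1}^{k-1}(r^{n-k}|u'|^{k-1}u')'=r^{n-1}u^{p}$, $u(r)>0$ for all $r>0$, $u'(0)=0$, $u(0)=\rho$, where $C_{n-1}^{k-1}$ is the binomial coefficient. A solution $u$ of (1.6) is regular if $x\mapsto u(|x|)$ belongs to $C^2(\mathbb{R}^n)$. *)

theory Defs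
  imports "HOL-Analysis.Analysis" "HOL-Library.Landau_Symbols"
begin

definition C2 :: "('a::euclidean_space \<Rightarrow> real) \<Rightarrow> bool" where
  "C2 f \<longleftrightarrow> (\<exists>(f' :: 'a \<Rightarrow> ('a \<Rightarrow>\<^sub>L real)) (f'' :: 'a \<Rightarrow> ('a \<Rightarrow>\<^sub>L ('a \<Rightarrow>\<^sub>L real))).
      (\<forall>x. (f has_derivative blinfun_apply (f' x)) (at x)) \<and>
      (\<forall>x. (f' has_derivative blinfun_apply (f'' x)) (at x)) \<and>
      continuous_on UNIV f'')"

definition solves_1_6 :: "nat \<Rightarrow> nat \<Rightarrow> real \<Rightarrow> real \<Rightarrow> (real \<Rightarrow> real) \<Rightarrow> bool" where
  "solves_1_6 n k p \<rho> u \<longleftrightarrow>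
     (\<forall>r>0. u r > 0) \<and> u 0 = \<rho> \<and>
     (u has_real_derivative 0) (at 0 within {0..}) \<and>
     (\<forall>r>0. u differentiable (at r) \<and>
        ((\<lambda>s. s ^ (n - k) * \<bar>deriv u s\<bar> ^ (k - 1) * deriv u s) has_real_derivative
           (- real k / real ((n - 1) choose (k - 1)) * r ^ (n - 1) * u r powr p)) (at r))"

definition regular_sol :: "'n::finite itself \<Rightarrow> nat \<Rightarrow> real \<Rightarrow> real \<Rightarrow> (real \<Rightarrow> real) \<Rightarrow> bool" where
  "regular_sol _ k p \<rho> u \<longleftrightarrow> solves_1_6 CARD('n) k p \<rho> u \<and> C2 (\<lambda>x::real^'n. u (norm x))"

end

theory Submission
  imports Defs
begin

text \<open>With \<open>w = r^(n-k) |u'|^(k-1) u'\<close> the equation reads \<open>w' = -c r^(n-1) u^p\<close>.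
  A bound \<open>u \<le> M r^-b\<close> gives \<open>|w'| \<le> K r^(n-pb-1)\<close>; integrating, \<open>|w| \<le> A r^s\<close> for any
  \<open>s > 0\<close> with \<open>s \<ge> n - pb\<close> (and \<open>w\<close> is bounded if \<open>pb > n\<close>), so \<open>|u'| \<le> B r^((s+k-n)/k)\<close>,
  and integrating from infinity, where \<open>u \<rightarrow> 0\<close>, yields \<open>u \<le> M' r^-((n-2k-s)/k)\<close>.
  Writing \<open>b = a + d\<close> with \<open>a = 2k/(p-k)\<close>, one such step turns the excess \<open>d\<close> into \<open>l d\<close>
  for a fixed \<open>1 < l < p/k\<close>, so after finitely many steps \<open>pb > n\<close>, and one more step gives
  the rate \<open>(n-2k)/k\<close>.\<close>

lemma abs_le_of_deriv_dominated:
  fixes f f' G g :: "real \<Rightarrow> real"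
  assumes f: "\<And>r. r \<ge> R \<Longrightarrow> (f has_real_derivative f' r) (at r)"
    and G: "\<And>r. r \<ge> R \<Longrightarrow> (G has_real_derivative g r) (at r)"
    and dominated: "\<And>r. r \<ge> R \<Longrightarrow> \<bar>f' r\<bar> \<le> g r" and "R \<le> r"
  shows "\<bar>f r\<bar> \<le> \<bar>f R\<bar> + (G r - G R)"
proof -
  have "G R - f R \<le> G r - f r"
  proof (rule deriv_nonneg_imp_mono[where g = "\<lambda>x. G x - f x" and g' = "\<lambda>x. g x - f' x"])
    fix x assume "x \<in> {R..r}"
    then show "((\<lambda>x. G x - f x) has_real_derivative g x - f' x) (at x)"
      and "0 \<le> g x - f' x"
      using f G dominated[of x] by (auto intro!: DERIV_diff)
  qed (rule \<open>R \<le> r\<close>)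
  moreover have "G R + f R \<le> G r + f r"
  proof (rule deriv_nonneg_imp_mono[where g = "\<lambda>x. G x + f x" and g' = "\<lambda>x. g x + f' x"])
    fix x assume "x \<in> {R..r}"
    then show "((\<lambda>x. G x + f x) has_real_derivative g x + f' x) (at x)"
      and "0 \<le> g x + f' x"
      using f G dominated[of x] by (auto intro!: DERIV_add)
  qed (rule \<open>R \<le> r\<close>)
  ultimately show ?thesis by auto
qed

lemma le_powr_of_deriv_bound_tendsto_0:
  fixes u u' :: "real \<Rightarrow> real"
  assumes u: "\<And>r. r \<ge> R \<Longrightarrow> (u has_real_derivative u' r) (at r)"
    and u'_bound: "\<And>r. r \<ge> R \<Longrightarrow> \<bar>u' r\<bar> \<le> B * r powr (t - 1)"
    and "t < 0" "0 < R" and lim: "(u \<longlongrightarrow> 0) at_top" and "R \<le> r"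
  shows "u r \<le> B / (- t) * r powr t"
proof -
  define g where "g x = u x - B / (- t) * x powr t" for x
  have g_mono: "g r \<le> g x" if "r \<le> x" for x
  proof (rule deriv_nonneg_imp_mono[where g = g and a = r and b = x
        and g' = "\<lambda>x. u' x + B * x powr (t - 1)"])
    fix y assume "y \<in> {r..x}"
    then have y: "0 < y" "R \<le> y" using \<open>R \<le> r\<close> \<open>0 < R\<close> by auto
    have "(g has_real_derivative u' y - B / (- t) * (t * y powr (t - 1))) (at y)"
      unfolding g_def by (intro DERIV_diff u y DERIV_cmult has_real_derivative_powr)
    moreover have "u' y - B / (- t) * (t * y powr (t - 1)) = u' y + B * y powr (t - 1)"
      using \<open>t < 0\<close> by (simp add: field_simps)
    ultimately show "(g has_real_derivative u' y + B * y powr (t - 1)) (at y)" by simp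
    show "0 \<le> u' y + B * y powr (t - 1)" using u'_bound[OF y(2)] by linarith
  qed (use that in auto)
  have "((\<lambda>x. x powr t) \<longlongrightarrow> 0) at_top"
    using \<open>t < 0\<close> by (intro tendsto_neg_powr filterlim_ident) auto
  then have "(g \<longlongrightarrow> 0 - B / (- t) * 0) at_top"
    unfolding g_def by (intro tendsto_intros lim)
  then have "g r \<le> 0"
    by (intro tendsto_le[OF trivial_limit_at_top_linorder _ tendsto_const])
       (auto simp: eventually_at_top_linorder intro!: exI[of _ r] g_mono)
  then show ?thesis unfolding g_def by simp
qed

lemma le_powr_inverse_of_power_le:
  fixes x X :: real
  assumes "0 < k" "0 \<le> x" "x ^ k \<le> X"
  shows "x \<le> X powr (1 / real k)"
proof (cases "x = 0")
  case False
  then have "x = (x ^ k) powr (1 / real k)"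
    using assms by (simp add: powr_realpow[symmetric] powr_powr)
  also have "\<dots> \<le> X powr (1 / real k)"
    using assms False by (intro powr_mono2) auto
  finally show ?thesis .
qed simp

text \<open>Problem (1.6) with the constant \<open>k / C(n-1, k-1)\<close> abstracted to any \<open>c \<ge> 0\<close>.\<close>

locale radial_solution =
  fixes n k :: nat and p c :: real and u :: "real \<Rightarrow> real"
  assumes k_bounds: "1 \<le> k" "k < n" and p_pos: "0 < p" and c_nonneg: "0 \<le> c"
    and u_pos: "\<And>r. 0 < r \<Longrightarrow> 0 < u r"
    and u_differentiable: "\<And>r. 0 < r \<Longrightarrow> u differentiable (at r)"
    and flux_equation: "\<And>r. 0 < r \<Longrightarrow>
      ((\<lambda>s. s ^ (n - k) * \<bar>deriv u s\<bar> ^ (k - 1) * deriv u s) has_real_derivative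
        - c * r ^ (n - 1) * u r powr p) (at r)"
begin

definition flux :: "real \<Rightarrow> real" where
  "flux s = s ^ (n - k) * \<bar>deriv u s\<bar> ^ (k - 1) * deriv u s"

definition decays :: "real \<Rightarrow> bool" where
  "decays b \<longleftrightarrow> (\<exists>M R. 1 \<le> R \<and> 0 < M \<and> (\<forall>r\<ge>R. u r \<le> M * r powr - b))"

lemma has_real_derivative_flux:
  "0 < r \<Longrightarrow> (flux has_real_derivative - c * r ^ (n - 1) * u r powr p) (at r)"
  unfolding flux_def[abs_def] by (rule flux_equation)

lemma has_real_derivative_u: "0 < r \<Longrightarrow> (u has_real_derivative deriv u r) (at r)"
  by (simp add: DERIV_deriv_iff_real_differentiable u_differentiable)

lemma decays_iff_bigo: "decays b \<longleftrightarrow> u \<in> O[at_top](\<lambda>r. r powr - b)"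
proof
  assume "decays b"
  then obtain M R where MR: "1 \<le> R" "\<And>r. r \<ge> R \<Longrightarrow> u r \<le> M * r powr - b"
    unfolding decays_def by blast
  have "norm (u r) \<le> M * norm (r powr - b)" if "r \<ge> R" for r
    using MR(2)[OF that] u_pos[of r] that \<open>1 \<le> R\<close> by simp
  then have "\<forall>\<^sub>F r in at_top. norm (u r) \<le> M * norm (r powr - b)"
    unfolding eventually_at_top_linorder by blast
  then show "u \<in> O[at_top](\<lambda>r. r powr - b)" by (rule bigoI)
next
  assume "u \<in> O[at_top](\<lambda>r. r powr - b)"
  then obtain C where "0 < C" "\<forall>\<^sub>F r in at_top. norm (u r) \<le> C * norm (r powr - b)"
    by (elim landau_o.bigE)
  then obtain N where N: "\<And>r. r \<ge> N \<Longrightarrow> norm (u r) \<le> C * norm (r powr - b)"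
    unfolding eventually_at_top_linorder by blast
  have "u r \<le> C * r powr - b" if "r \<ge> max N 1" for r
    using N[of r] that by simp
  with \<open>0 < C\<close> show "decays b"
    unfolding decays_def by (intro exI[of _ C] exI[of _ "max N 1"]) simp
qed

lemma decays_imp_tendsto_0:
  assumes "decays b" "0 < b"
  shows "(u \<longlongrightarrow> 0) at_top"
proof -
  obtain M R where "\<And>r. r \<ge> R \<Longrightarrow> u r \<le> M * r powr - b"
    using assms unfolding decays_def by blast
  then have upper: "\<forall>\<^sub>F r in at_top. u r \<le> M * r powr - b"
    unfolding eventually_at_top_linorder by blast
  have lower: "\<forall>\<^sub>F r in at_top. 0 \<le> u r"
    unfolding eventually_at_top_linorder by (auto intro!: exI[of _ 1] less_imp_le u_pos)
  have "((\<lambda>r. r powr - b) \<longlongrightarrow> 0) at_top"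
    using \<open>0 < b\<close> by (intro tendsto_neg_powr filterlim_ident) auto
  then have "((\<lambda>r. M * r powr - b) \<longlongrightarrow> 0) at_top"
    by (rule tendsto_mult_right_zero)
  with lower upper show ?thesis by (rule tendsto_sandwich[OF _ _ tendsto_const])
qed

lemma decays_imp_flux_deriv_bound:
  assumes "decays b"
  shows "\<exists>R K. 1 \<le> R \<and> 0 \<le> K \<and>
    (\<forall>r\<ge>R. \<bar>- c * r ^ (n - 1) * u r powr p\<bar> \<le> K * r powr (real n - p * b - 1))"
proof -
  obtain M R where MR: "1 \<le> R" "0 < M" "\<And>r. r \<ge> R \<Longrightarrow> u r \<le> M * r powr - b"
    using assms unfolding decays_def by blast
  have "\<bar>- c * r ^ (n - 1) * u r powr p\<bar> \<le> (c * M powr p) * r powr (real n - p * b - 1)"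
    if "r \<ge> R" for r
  proof -
    have r: "0 < r" using that MR by auto
    have "\<bar>- c * r ^ (n - 1) * u r powr p\<bar> = c * r powr (real n - 1) * u r powr p"
      using c_nonneg r k_bounds by (simp add: abs_mult powr_realpow[symmetric] of_nat_diff)
    also have "\<dots> \<le> c * r powr (real n - 1) * (M * r powr - b) powr p"
      using c_nonneg r p_pos u_pos[OF r] MR(3)[OF that]
      by (intro mult_left_mono powr_mono2) auto
    also have "\<dots> = (c * M powr p) * r powr (real n - p * b - 1)"
      using MR(2) r by (simp add: powr_mult powr_powr powr_add[symmetric] algebra_simps)
    finally show ?thesis .
  qed
  with MR c_nonneg show ?thesis by (intro exI[of _ R] exI[of _ "c * M powr p"]) simp
qed

lemma decays_imp_flux_growth_bound:
  assumes "decays b" "0 < s" "real n - p * b \<le> s"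
  obtains A R where "1 \<le> R" "\<And>r. r \<ge> R \<Longrightarrow> \<bar>flux r\<bar> \<le> A * r powr s"
proof -
  obtain R K where KR: "1 \<le> R" "0 \<le> K"
    "\<And>r. r \<ge> R \<Longrightarrow> \<bar>- c * r ^ (n - 1) * u r powr p\<bar> \<le> K * r powr (real n - p * b - 1)"
    using decays_imp_flux_deriv_bound[OF assms(1)] by blast
  have "\<bar>flux r\<bar> \<le> (\<bar>flux R\<bar> + K / s) * r powr s" if "r \<ge> R" for r
  proof -
    have "\<bar>flux r\<bar> \<le> \<bar>flux R\<bar> + (K / s * r powr s - K / s * R powr s)"
    proof (rule abs_le_of_deriv_dominated[where G = "\<lambda>x. K / s * x powr s"])
      fix x assume "R \<le> x"
      then have x: "0 < x" using KR by auto
      show "(flux has_real_derivative - c * x ^ (n - 1) * u x powr p) (at x)"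
        using has_real_derivative_flux[OF x] .
      show "((\<lambda>x. K / s * x powr s) has_real_derivative K / s * (s * x powr (s - 1))) (at x)"
        by (intro DERIV_cmult has_real_derivative_powr x)
      have "K * x powr (real n - p * b - 1) \<le> K * x powr (s - 1)"
        using KR \<open>R \<le> x\<close> assms by (intro mult_left_mono powr_mono) auto
      then show "\<bar>- c * x ^ (n - 1) * u x powr p\<bar> \<le> K / s * (s * x powr (s - 1))"
        using KR(3)[OF \<open>R \<le> x\<close>] \<open>0 < s\<close> by simp
    qed (use that in auto)
    also have "\<dots> \<le> \<bar>flux R\<bar> * r powr s + K / s * r powr s"
    proof -
      have "1 \<le> r powr s" using that KR \<open>0 < s\<close> by (intro ge_one_powr_ge_zero) auto
      then have "\<bar>flux R\<bar> \<le> \<bar>flux R\<bar> * r powr s"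
        using mult_left_mono[of 1 "r powr s" "\<bar>flux R\<bar>"] by simp
      moreover have "K / s * R powr s \<ge> 0" using KR \<open>0 < s\<close> by simp
      ultimately show ?thesis by linarith
    qed
    finally show ?thesis by (simp add: algebra_simps)
  qed
  with KR(1) show thesis by (rule that)
qed

lemma decays_imp_flux_bounded:
  assumes "decays b" "real n < p * b"
  obtains A R where "1 \<le> R" "\<And>r. r \<ge> R \<Longrightarrow> \<bar>flux r\<bar> \<le> A"
proof -
  define e where "e = real n - p * b"
  have "e < 0" using assms e_def by simp
  obtain R K where KR: "1 \<le> R" "0 \<le> K"
    "\<And>r. r \<ge> R \<Longrightarrow> \<bar>- c * r ^ (n - 1) * u r powr p\<bar> \<le> K * r powr (e - 1)"
    using decays_imp_flux_deriv_bound[OF assms(1)] unfolding e_def by blast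
  have "\<bar>flux r\<bar> \<le> \<bar>flux R\<bar> + K / (- e) * R powr e" if "r \<ge> R" for r
  proof -
    have "\<bar>flux r\<bar> \<le> \<bar>flux R\<bar> + (K / e * r powr e - K / e * R powr e)"
    proof (rule abs_le_of_deriv_dominated[where G = "\<lambda>x. K / e * x powr e"])
      fix x assume "R \<le> x"
      then have x: "0 < x" using KR by auto
      show "(flux has_real_derivative - c * x ^ (n - 1) * u x powr p) (at x)"
        using has_real_derivative_flux[OF x] .
      show "((\<lambda>x. K / e * x powr e) has_real_derivative K / e * (e * x powr (e - 1))) (at x)"
        by (intro DERIV_cmult has_real_derivative_powr x)
      show "\<bar>- c * x ^ (n - 1) * u x powr p\<bar> \<le> K / e * (e * x powr (e - 1))"
        using KR(3)[OF \<open>R \<le> x\<close>] \<open>e < 0\<close> by simp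
    qed (use that in auto)
    moreover have "K / e * r powr e \<le> 0"
      using KR \<open>e < 0\<close> by (simp add: divide_nonneg_neg mult_nonpos_nonneg)
    moreover have "K / e * R powr e = - (K / (- e) * R powr e)" by simp
    ultimately show ?thesis by linarith
  qed
  with KR(1) show thesis by (rule that)
qed

lemma decays_of_flux_bound:
  assumes flux_bound: "\<And>r. r \<ge> R \<Longrightarrow> \<bar>flux r\<bar> \<le> A * r powr s" and "1 \<le> R"
    and "0 \<le> s" "s < real n - 2 * real k" and "decays b" "0 < b"
  shows "decays ((real n - 2 * real k - s) / real k)"
proof -
  have "0 \<le> A * R powr s" "0 < R powr s"
    using flux_bound[of R] \<open>1 \<le> R\<close> by auto
  then have "0 \<le> A" by (simp add: zero_le_mult_iff)
  define t where "t = - ((real n - 2 * real k - s) / real k)"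
  have k: "0 < real k" using k_bounds by simp
  have "t < 0" using assms k unfolding t_def by simp
  define B where "B = A powr (1 / real k)"
  have deriv_bound: "\<bar>deriv u r\<bar> \<le> B * r powr (t - 1)" if "r \<ge> R" for r
  proof -
    have r: "0 < r" using that \<open>1 \<le> R\<close> by simp
    have "\<bar>flux r\<bar> = r powr (real n - real k) * \<bar>deriv u r\<bar> ^ k"
      using r k_bounds
      by (simp add: flux_def abs_mult power_abs powr_realpow[symmetric] of_nat_diff
          flip: power_Suc2 Suc_diff_le)
    then have "\<bar>deriv u r\<bar> ^ k \<le> A * r powr s / r powr (real n - real k)"
      using flux_bound[OF that] r by (simp add: field_simps)
    also have "\<dots> = A * r powr (s - (real n - real k))"
      using r by (simp add: powr_diff)
    finally have "\<bar>deriv u r\<bar> \<le> (A * r powr (s - (real n - real k))) powr (1 / real k)"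
      using k by (intro le_powr_inverse_of_power_le) auto
    also have "\<dots> = B * r powr (t - 1)"
      using \<open>0 \<le> A\<close> r k by (simp add: B_def powr_mult powr_powr t_def field_simps)
    finally show ?thesis .
  qed
  have "u r \<le> max 1 (B / (- t)) * r powr t" if "r \<ge> R" for r
  proof -
    have "u r \<le> B / (- t) * r powr t"
      using has_real_derivative_u deriv_bound \<open>t < 0\<close> \<open>1 \<le> R\<close>
        decays_imp_tendsto_0[OF \<open>decays b\<close> \<open>0 < b\<close>] that
      by (intro le_powr_of_deriv_bound_tendsto_0) auto
    also have "\<dots> \<le> max 1 (B / (- t)) * r powr t"
      by (intro mult_right_mono) auto
    finally show ?thesis .
  qed
  then have "1 \<le> R \<and> 0 < max 1 (B / (- t)) \<and> (\<forall>r\<ge>R. u r \<le> max 1 (B / (- t)) * r powr t)"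
    using \<open>1 \<le> R\<close> by auto
  then show ?thesis unfolding decays_def t_def by blast
qed

lemma decays_optimal:
  assumes "decays b" "0 < b" "real n < p * b" "2 * real k < real n"
  shows "decays ((real n - 2 * real k) / real k)"
proof -
  obtain A R where "1 \<le> R" "\<And>r. r \<ge> R \<Longrightarrow> \<bar>flux r\<bar> \<le> A"
    using decays_imp_flux_bounded[OF assms(1,3)] by blast
  then have "decays ((real n - 2 * real k - 0) / real k)"
    using assms by (intro decays_of_flux_bound[where A = A and R = R]) auto
  then show ?thesis by simp
qed

text \<open>Choosing \<open>s\<close> as small as the integration allows turns the decay rate \<open>a + d\<close>
  into \<open>a + (p/k) d\<close>; we only claim \<open>a + l d\<close> so that \<open>s > 0\<close> is guaranteed.\<close>

lemma decays_improve:
  defines "a \<equiv> 2 * real k / (p - real k)"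
  assumes "decays b" "a < b" "p * b \<le> real n" "real k < p" "0 < l" "real k * l < p"
    "2 * real k < real n"
  shows "decays (a + l * (b - a))"
proof -
  define d where "d = b - a"
  define s where "s = real n - 2 * real k - real k * (a + l * d)"
  have k: "0 < real k" using k_bounds by simp
  have "0 < a" unfolding a_def using assms k by simp
  have "(p - real k) * a = 2 * real k"
    unfolding a_def using assms by simp
  then have pa: "p * a - real k * a = 2 * real k" by (simp add: algebra_simps)
  have "real k * l * d < p * d"
    using assms unfolding d_def by (intro mult_strict_right_mono) auto
  then have "real n - p * b \<le> s" "0 < s"
    using pa assms(4) unfolding s_def d_def by (simp_all add: algebra_simps)
  moreover have "0 < real k * (a + l * d)"
    unfolding d_def using k \<open>0 < a\<close> assms by (intro mult_pos_pos add_pos_pos) auto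
  then have "s < real n - 2 * real k" unfolding s_def by linarith
  moreover obtain A R where "1 \<le> R" "\<And>r. r \<ge> R \<Longrightarrow> \<bar>flux r\<bar> \<le> A * r powr s"
    using decays_imp_flux_growth_bound[OF assms(2)] calculation by blast
  ultimately have "decays ((real n - 2 * real k - s) / real k)"
    using assms \<open>0 < a\<close> by (intro decays_of_flux_bound[where A = A and R = R and b = b]) auto
  moreover have "(real n - 2 * real k - s) / real k = a + l * d"
    unfolding s_def using k by (simp add: field_simps)
  ultimately show ?thesis unfolding d_def by simp
qed

lemma decays_bootstrap:
  assumes "decays (2 * real k / (p - real k) + \<epsilon>)" "0 < \<epsilon>" "real k < p"
    "2 * real k < real n"
  shows "decays ((real n - 2 * real k) / real k)"
proof -
  define a where "a = 2 * real k / (p - real k)"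
  define l where "l = (1 + p / real k) / 2"
  have k: "0 < real k" using k_bounds by simp
  have "0 < a" unfolding a_def using assms k by simp
  have "1 < l" "real k * l < p" unfolding l_def using assms k by (simp_all add: field_simps)
  have excess_pos: "0 < \<epsilon> * l ^ j" for j
    using \<open>0 < \<epsilon>\<close> \<open>1 < l\<close> by (intro mult_pos_pos zero_less_power) auto
  have decays_or_optimal: "decays (a + \<epsilon> * l ^ j) \<or> decays ((real n - 2 * real k) / real k)" for j
  proof (induction j)
    case 0
    then show ?case using assms(1) unfolding a_def by simp
  next
    case (Suc j)
    show ?case
    proof (cases "decays ((real n - 2 * real k) / real k)")
      case False
      with Suc have "decays (a + \<epsilon> * l ^ j)" by simp
      moreover have "0 < a + \<epsilon> * l ^ j" using \<open>0 < a\<close> excess_pos[of j] by simp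
      ultimately have "p * (a + \<epsilon> * l ^ j) \<le> real n"
        using False decays_optimal assms(4) by force
      then have "decays (a + l * (a + \<epsilon> * l ^ j - a))"
        using \<open>decays (a + \<epsilon> * l ^ j)\<close> excess_pos[of j] \<open>1 < l\<close> \<open>real k * l < p\<close> assms
        unfolding a_def by (intro decays_improve) auto
      then show ?thesis by (simp add: algebra_simps)
    qed simp
  qed
  obtain j where "(real n / p - a) / \<epsilon> < l ^ j"
    using real_arch_pow[OF \<open>1 < l\<close>] by blast
  then have "real n / p < a + \<epsilon> * l ^ j"
    using \<open>0 < \<epsilon>\<close> by (simp add: pos_divide_less_eq mult.commute)
  moreover have "0 < p" using assms k by linarith
  ultimately have "real n < p * (a + \<epsilon> * l ^ j)"
    by (metis mult.commute pos_divide_less_eq)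
  moreover have "0 < a + \<epsilon> * l ^ j" using \<open>0 < a\<close> excess_pos[of j] by simp
  ultimately show ?thesis
    using decays_or_optimal[of j] decays_optimal assms by blast
qed

end

lemma solves_1_6_imp_radial_solution:
  assumes "solves_1_6 n k p \<rho> u" "1 \<le> k" "k < n" "0 < p"
  shows "radial_solution n k p (real k / real ((n - 1) choose (k - 1))) u"
  using assms unfolding solves_1_6_def by unfold_locales auto

theorem lemma2p2:
  fixes n k :: nat and p \<rho> \<epsilon> :: real and u :: "real \<Rightarrow> real"
  assumes "CARD('n::finite) = n" and "n \<ge> 3"
    and "1 < k" and "2 * k < n"
    and "p > real n * real k / (real n - 2 * real k)"
    and "\<rho> > 0"
    and "regular_sol TYPE('n) k p \<rho> u"
    and "0 < \<epsilon>" and "\<epsilon> < (real n - 2 * real k) / real k - 2 * real k / (p - real k)"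
    and "u \<in> O[at_top](\<lambda>r. r powr (- (2 * real k / (p - real k)) - \<epsilon>))"
  shows "u \<in> O[at_top](\<lambda>r. r powr ((2 * real k - real n) / real k))"
proof -
  have "real k < real n * real k / (real n - 2 * real k)"
    using assms(3,4) by (simp add: pos_less_divide_eq algebra_simps)
  then have "real k < p" using assms(5) by linarith
  moreover have "solves_1_6 n k p \<rho> u"
    using assms(1,7) unfolding regular_sol_def by simp
  ultimately interpret radial_solution n k p "real k / real ((n - 1) choose (k - 1))" u
    using assms(3,4) by (intro solves_1_6_imp_radial_solution) auto
  have "decays (2 * real k / (p - real k) + \<epsilon>)"
    using assms(10) by (simp add: decays_iff_bigo)
  then have "decays ((real n - 2 * real k) / real k)"
    using \<open>real k < p\<close> assms(4,8) by (intro decays_bootstrap) auto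
  then show ?thesis by (simp add: decays_iff_bigo minus_divide_left)
qed

end
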